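(* Let $L$ be a free $\mathbb{Z}$-module of rank $2n$ with basis $e_1,\dots,e_n,x_1,\dots,x_n$. Let $\mathcal{K}$ be the set of pairs $(K,\kappa)$ where $K\subseteq\{1,\dots,n\}$ (possibly empty) and $\kappa\colon K\to\{1,\dots,n\}$ is an order-preserving injective map. For $(K,\kappa)\in\mathcal{K}$ put $v_{(K,\kappa)}:=v_1\wedge\dots\wedge v_n\in\Lambda^nL$, where $v_i=e_i$ if $i\notin K$ and $v_i=e_i+x_{\kappa(i)}$ if $i\in K$. Then $\{v_{(K,\kappa)}\}_{(K,\kappa)\in\mathcal{K}}$ is a basis of the $\mathbb{Z}$-module $\Lambda^nL$. *)

theory Defs
  imports "Jordan_Normal_Form.Determinant" "HOL-Library.FuncSet"
begin

text \<open>The free Z-module L of rank d is modelled as int vectors of dimension d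
(basis = unit vectors). The exterior power \<Lambda>^m L is modelled through its
standard basis e_S (S an m-subset of the index set {0..<d}): an element is an
integer-valued function on index sets S, supported on m-subsets of {0..<d}.\<close>

definition ext_power :: "nat \<Rightarrow> nat \<Rightarrow> (nat set \<Rightarrow> int) set" where
  "ext_power d m = {f. \<forall>S. f S \<noteq> 0 \<longrightarrow> S \<subseteq> {..<d} \<and> card S = m}"

text \<open>Wedge product v_1 \<and> ... \<and> v_m of a list of vectors of dimension d:
its coefficient at e_S is the m\<times>m minor on the columns S (in increasing order).\<close>

definition wedge :: "nat \<Rightarrow> int vec list \<Rightarrow> nat set \<Rightarrow> int" where
  "wedge d vs S =
     (if S \<subseteq> {..<d} \<and> card S = length vs
      then det (mat (length vs) (length vs)
                  (\<lambda>(i, k). vs ! i $ (sorted_list_of_set S ! k)))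
      else 0)"

definition is_Z_basis :: "'i set \<Rightarrow> ('i \<Rightarrow> 'b \<Rightarrow> int) \<Rightarrow> ('b \<Rightarrow> int) set \<Rightarrow> bool" where
  "is_Z_basis I b M \<longleftrightarrow>
     finite I \<and> (\<forall>i\<in>I. b i \<in> M) \<and>
     (\<forall>c :: 'i \<Rightarrow> int. (\<lambda>s. \<Sum>i\<in>I. c i * b i s) = (\<lambda>s. 0) \<longrightarrow> (\<forall>i\<in>I. c i = 0)) \<and>
     (\<forall>y\<in>M. \<exists>c :: 'i \<Rightarrow> int. y = (\<lambda>s. \<Sum>i\<in>I. c i * b i s))"

definition e_vec :: "nat \<Rightarrow> nat \<Rightarrow> int vec" where
  "e_vec n i = unit_vec (2 * n) (i - 1)"

definition x_vec :: "nat \<Rightarrow> nat \<Rightarrow> int vec" where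
  "x_vec n j = unit_vec (2 * n) (n + j - 1)"

definition Kset :: "nat \<Rightarrow> (nat set \<times> (nat \<Rightarrow> nat)) set" where
  "Kset n = {(K, \<kappa>). K \<subseteq> {1..n} \<and> \<kappa> \<in> K \<rightarrow>\<^sub>E {1..n} \<and> mono_on K \<kappa> \<and> inj_on \<kappa> K}"

definition v_vec :: "nat \<Rightarrow> nat set \<times> (nat \<Rightarrow> nat) \<Rightarrow> nat \<Rightarrow> int vec" where
  "v_vec n Kk i = (if i \<in> fst Kk then e_vec n i + x_vec n (snd Kk i) else e_vec n i)"

definition v_wedge :: "nat \<Rightarrow> nat set \<times> (nat \<Rightarrow> nat) \<Rightarrow> nat set \<Rightarrow> int" where
  "v_wedge n Kk = wedge (2 * n) (map (v_vec n Kk) [1..<n + 1])"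

end

theory Submission
  imports Defs "HOL-Library.Infinite_Set"
begin

text \<open>Expanding v_(K,\<kappa>) = (e_1 + ...) \<and> ... \<and> (e_n + ...) gives, up to sign, the sum of the
standard basis vectors e_({1..n} - J) \<and> x_\<kappa>(J) over all J \<subseteq> K. Grade the standard basis of
\<Lambda>^n L by the number of x's. Then the term J = K is the only one of top degree card K, and it has
coefficient \<plusminus>1; moreover (K, \<kappa>) \<mapsto> e_({1..n} - K) \<and> x_\<kappa>(K) is a bijection from \<K> onto the
standard basis, since an order-preserving injection is determined by its image. Hence the family is
unitriangular with respect to the standard basis, and so it is a Z-basis.\<close>

definition in_Z_span :: "'i set \<Rightarrow> ('i \<Rightarrow> 'b \<Rightarrow> int) \<Rightarrow> ('b \<Rightarrow> int) \<Rightarrow> bool" where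
  "in_Z_span I b y \<longleftrightarrow> (\<exists>c. y = (\<lambda>s. \<Sum>i\<in>I. c i * b i s))"

lemma in_Z_span_add:
  assumes "in_Z_span I b x" and "in_Z_span I b y"
  shows "in_Z_span I b (\<lambda>s. x s + y s)"
proof -
  obtain c d where "x = (\<lambda>s. \<Sum>i\<in>I. c i * b i s)" and "y = (\<lambda>s. \<Sum>i\<in>I. d i * b i s)"
    using assms unfolding in_Z_span_def by blast
  then have "(\<lambda>s. x s + y s) = (\<lambda>s. \<Sum>i\<in>I. (c i + d i) * b i s)"
    by (simp add: distrib_right sum.distrib)
  then show ?thesis unfolding in_Z_span_def by (rule exI[of _ "\<lambda>i. c i + d i"])
qed

lemma in_Z_span_scaled_member:
  assumes "finite I" and "i \<in> I"
  shows "in_Z_span I b (\<lambda>s. a * b i s)"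
  unfolding in_Z_span_def
  by (rule exI[of _ "\<lambda>j. if j = i then a else 0"])
    (simp add: assms if_distrib[of "\<lambda>x. x * _"] sum.delta cong: if_cong)

lemma in_Z_span_sum:
  assumes "\<And>a. a \<in> A \<Longrightarrow> r a \<noteq> 0 \<Longrightarrow> in_Z_span I b (w a)"
  shows "in_Z_span I b (\<lambda>s. \<Sum>a\<in>A. r a * w a s)"
proof -
  obtain C where C: "\<And>a. a \<in> A \<Longrightarrow> r a \<noteq> 0 \<Longrightarrow> w a = (\<lambda>s. \<Sum>i\<in>I. C a i * b i s)"
    using assms unfolding in_Z_span_def by metis
  have "r a * w a s = r a * (\<Sum>i\<in>I. C a i * b i s)" if "a \<in> A" for a s
    using C[OF that] by (cases "r a = 0") auto
  then have "(\<lambda>s. \<Sum>a\<in>A. r a * w a s) = (\<lambda>s. \<Sum>i\<in>I. (\<Sum>a\<in>A. r a * C a i) * b i s)"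
    by (simp add: sum_distrib_left sum_distrib_right sum.swap[of _ I] mult.assoc cong: sum.cong)
  then show ?thesis unfolding in_Z_span_def by (rule exI[of _ "\<lambda>i. \<Sum>a\<in>A. r a * C a i"])
qed

lemma expansion_in_indicators:
  fixes y :: "'b \<Rightarrow> 'a::semiring_1"
  assumes "finite T" and "\<And>S. y S \<noteq> 0 \<Longrightarrow> S \<in> T"
  shows "y = (\<lambda>s. \<Sum>S\<in>T. y S * (if s = S then 1 else 0))"
proof
  fix s
  show "y s = (\<Sum>S\<in>T. y S * (if s = S then 1 else 0))"
    using assms(1) assms(2)[of s] by (auto simp: if_distrib[of "\<lambda>x. _ * x"] sum.delta' cong: if_cong)
qed

lemma unitriangular_independent:
  fixes b :: "'i \<Rightarrow> 'b \<Rightarrow> int" and g :: "'b \<Rightarrow> 'a::linorder"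
  assumes fin: "finite I" and inj: "inj_on phi I"
    and diag: "\<And>i. i \<in> I \<Longrightarrow> b i (phi i) \<noteq> 0"
    and tri: "\<And>i S. i \<in> I \<Longrightarrow> b i S \<noteq> 0 \<Longrightarrow> S = phi i \<or> g S < g (phi i)"
    and zero: "(\<lambda>s. \<Sum>i\<in>I. c i * b i s) = (\<lambda>s. 0)"
  shows "\<forall>i\<in>I. c i = 0"
proof (rule ccontr)
  define A where "A = {i\<in>I. c i \<noteq> 0}"
  assume "\<not> (\<forall>i\<in>I. c i = 0)"
  then have "A \<noteq> {}" and "finite A" using fin unfolding A_def by auto
  then have "Max ((g \<circ> phi) ` A) \<in> (g \<circ> phi) ` A" by (intro Max_in) auto
  then obtain i0 where i0: "i0 \<in> A" and "g (phi i0) = Max ((g \<circ> phi) ` A)" by auto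
  with \<open>finite A\<close> have top: "g (phi j) \<le> g (phi i0)" if "j \<in> A" for j
    using that by (auto intro: Max_ge)
  have "c j * b j (phi i0) = 0" if "j \<in> I - {i0}" for j
  proof (rule ccontr)
    assume "c j * b j (phi i0) \<noteq> 0"
    then have "j \<in> A" and "phi i0 = phi j \<or> g (phi i0) < g (phi j)"
      using that tri unfolding A_def by auto
    moreover have "phi i0 \<noteq> phi j" using inj i0 that unfolding A_def by (auto dest: inj_onD)
    ultimately show False using top by fastforce
  qed
  then have "(\<Sum>i\<in>I - {i0}. c i * b i (phi i0)) = 0" by (simp add: sum.neutral)
  then have "(\<Sum>i\<in>I. c i * b i (phi i0)) = c i0 * b i0 (phi i0)"
    using sum.remove[OF fin, of i0 "\<lambda>i. c i * b i (phi i0)"] i0 unfolding A_def by simp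
  moreover have "(\<Sum>i\<in>I. c i * b i (phi i0)) = 0" using fun_cong[OF zero] by simp
  ultimately show False using i0 diag unfolding A_def by auto
qed

lemma unitriangular_spans_indicators:
  fixes b :: "'i \<Rightarrow> 'b \<Rightarrow> int" and g :: "'b \<Rightarrow> 'a::wellorder"
  assumes bij: "bij_betw phi I T" and finT: "finite T"
    and diag: "\<And>i. i \<in> I \<Longrightarrow> b i (phi i) \<in> {1, -1}"
    and tri: "\<And>i S. i \<in> I \<Longrightarrow> b i S \<noteq> 0 \<Longrightarrow> S = phi i \<or> g S < g (phi i)"
    and supp: "\<And>i S. i \<in> I \<Longrightarrow> b i S \<noteq> 0 \<Longrightarrow> S \<in> T"
    and "S \<in> T"
  shows "in_Z_span I b (\<lambda>s. if s = S then 1 else 0)"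
  using \<open>S \<in> T\<close>
proof (induction "g S" arbitrary: S rule: less_induct)
  case less
  obtain i where i: "i \<in> I" "phi i = S" using bij less.prems unfolding bij_betw_def by auto
  define \<epsilon> where "\<epsilon> = b i S"
  have "\<epsilon> * \<epsilon> = 1" using diag[OF i(1)] i(2) unfolding \<epsilon>_def by auto
  have expand: "b i s = (\<Sum>S'\<in>T. b i S' * (if s = S' then 1 else 0))" for s
    by (rule fun_cong[OF expansion_in_indicators[OF finT supp[OF i(1)]]])
  have eq: "(\<lambda>s. if s = S then 1 else 0) =
      (\<lambda>s. \<epsilon> * b i s + (\<Sum>S'\<in>T - {S}. (- \<epsilon> * b i S') * (if s = S' then 1 else 0)))"
  proof
    fix s
    define R where "R = (\<Sum>S'\<in>T - {S}. b i S' * (if s = S' then 1 else 0))"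
    have "b i s = \<epsilon> * (if s = S then 1 else 0) + R"
      using expand[of s] finT less.prems unfolding \<epsilon>_def R_def by (simp add: sum.remove)
    moreover have "(\<Sum>S'\<in>T - {S}. (- \<epsilon> * b i S') * (if s = S' then 1 else 0)) = - \<epsilon> * R"
      unfolding R_def by (simp add: sum_distrib_left mult.assoc)
    ultimately show "(if s = S then 1 else 0) =
        \<epsilon> * b i s + (\<Sum>S'\<in>T - {S}. (- \<epsilon> * b i S') * (if s = S' then 1 else 0))"
      using \<open>\<epsilon> * \<epsilon> = 1\<close> by (simp add: distrib_left mult.assoc[symmetric])
  qed
  have "in_Z_span I b (\<lambda>s. \<epsilon> * b i s)"
    using bij finT i(1) by (intro in_Z_span_scaled_member) (auto dest: bij_betw_finite)
  moreover have "in_Z_span I b (\<lambda>s. \<Sum>S'\<in>T - {S}. (- \<epsilon> * b i S') * (if s = S' then 1 else 0))"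
  proof (rule in_Z_span_sum)
    fix S' assume "S' \<in> T - {S}" and "- \<epsilon> * b i S' \<noteq> 0"
    then show "in_Z_span I b (\<lambda>s. if s = S' then 1 else 0)"
      using tri[OF i(1), of S'] i(2) by (intro less.hyps) auto
  qed
  ultimately show ?case unfolding eq by (rule in_Z_span_add)
qed

lemma is_Z_basis_unitriangular:
  fixes b :: "'i \<Rightarrow> 'b \<Rightarrow> int" and g :: "'b \<Rightarrow> 'a::wellorder"
  assumes bij: "bij_betw phi I T" and finT: "finite T"
    and diag: "\<And>i. i \<in> I \<Longrightarrow> b i (phi i) \<in> {1, -1}"
    and tri: "\<And>i S. i \<in> I \<Longrightarrow> b i S \<noteq> 0 \<Longrightarrow> S = phi i \<or> g S < g (phi i)"
    and supp: "\<And>i S. i \<in> I \<Longrightarrow> b i S \<noteq> 0 \<Longrightarrow> S \<in> T"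
  shows "is_Z_basis I b {y. \<forall>S. y S \<noteq> 0 \<longrightarrow> S \<in> T}"
proof -
  have finI: "finite I" using bij finT by (auto dest: bij_betw_finite)
  have "in_Z_span I b y" if y: "\<forall>S. y S \<noteq> 0 \<longrightarrow> S \<in> T" for y
  proof -
    have "y = (\<lambda>s. \<Sum>S\<in>T. y S * (if s = S then 1 else 0))"
      using y by (intro expansion_in_indicators[OF finT]) auto
    moreover have "in_Z_span I b (\<lambda>s. \<Sum>S\<in>T. y S * (if s = S then 1 else 0))"
      by (rule in_Z_span_sum) (rule unitriangular_spans_indicators[where b = b and g = g, OF assms])
    ultimately show ?thesis by simp
  qed
  moreover have "\<forall>i\<in>I. c i = 0" if "(\<lambda>s. \<Sum>i\<in>I. c i * b i s) = (\<lambda>s. 0)" for c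
    using unitriangular_independent[OF finI bij_betw_imp_inj_on[OF bij] _ tri that] diag by fastforce
  ultimately show ?thesis using finI supp unfolding is_Z_basis_def in_Z_span_def by blast
qed


lemma det_nonzero_obtains_permutation:
  fixes A :: "'a::comm_ring_1 mat"
  assumes A: "A \<in> carrier_mat n n" and "det A \<noteq> 0"
  obtains p where "p permutes {0..<n}" and "\<And>i. i < n \<Longrightarrow> A $$ (i, p i) \<noteq> 0"
proof -
  obtain p where p: "p permutes {0..<n}" and "signof p * (\<Prod>i = 0..<n. A $$ (i, p i)) \<noteq> 0"
    using \<open>det A \<noteq> 0\<close> unfolding det_def'[OF A] by (auto elim: sum.not_neutral_contains_not_neutral)
  have "A $$ (i, p i) \<noteq> 0" if "i < n" for i
  proof
    assume "A $$ (i, p i) = 0"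
    then have "(\<Prod>i = 0..<n. A $$ (i, p i)) = 0" using that by (intro prod_zero) auto
    then show False using \<open>signof p * (\<Prod>i = 0..<n. A $$ (i, p i)) \<noteq> 0\<close> by simp
  qed
  with p show thesis by (rule that)
qed

lemma det_eq_signof_unique_permutation:
  fixes A :: "'a::comm_ring_1 mat"
  assumes A: "A \<in> carrier_mat n n" and p: "p permutes {0..<n}"
    and one: "\<And>i. i < n \<Longrightarrow> A $$ (i, p i) = 1"
    and unique: "\<And>q. q permutes {0..<n} \<Longrightarrow> (\<And>i. i < n \<Longrightarrow> A $$ (i, q i) \<noteq> 0) \<Longrightarrow> q = p"
  shows "det A = signof p"
proof -
  let ?term = "\<lambda>q. signof q * (\<Prod>i = 0..<n. A $$ (i, q i))"
  have "?term q = 0" if "q \<in> {q. q permutes {0..<n}} - {p}" for q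
  proof -
    have "\<not> (\<forall>i<n. A $$ (i, q i) \<noteq> 0)" using that unique[of q] by auto
    then obtain i where "i < n" and "A $$ (i, q i) = 0" by auto
    then have "(\<Prod>i = 0..<n. A $$ (i, q i)) = 0" by (intro prod_zero) auto
    then show ?thesis by simp
  qed
  then have "det A = ?term p"
    unfolding det_def'[OF A]
    using sum.remove[of "{q. q permutes {0..<n}}" p ?term] finite_permutations[of "{0..<n}"] p
    by (simp add: sum.neutral)
  also have "\<dots> = signof p" using one by simp
  finally show ?thesis .
qed

text \<open>The Leibniz terms of the minor of vs on the columns S that do not vanish correspond to
the transversals: row i is sent to the column f i of S.\<close>

definition transversal :: "'a::zero vec list \<Rightarrow> nat set \<Rightarrow> (nat \<Rightarrow> nat) \<Rightarrow> bool" where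
  "transversal vs S f \<longleftrightarrow> bij_betw f {..<length vs} S \<and> (\<forall>i<length vs. vs ! i $ f i \<noteq> 0)"

lemma bij_betw_nth_permutes:
  assumes "distinct s" and "p permutes {0..<length s}"
  shows "bij_betw (\<lambda>i. s ! p i) {..<length s} (set s)"
proof -
  have "bij_betw p {..<length s} {..<length s}"
    using permutes_imp_bij[OF assms(2)] by (simp add: atLeast0LessThan)
  then show ?thesis using bij_betw_nth[OF assms(1) refl refl] by (auto dest: bij_betw_trans simp: comp_def)
qed

lemma bij_betw_nth_obtains_permutation:
  assumes "distinct s" and f: "bij_betw f {..<length s} (set s)"
  obtains p where "p permutes {0..<length s}" and "\<And>i. i < length s \<Longrightarrow> s ! p i = f i"
proof
  let ?m = "length s"
  define p where "p i = (if i < ?m then inv_into {..<?m} ((!) s) (f i) else i)" for i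
  have nth: "bij_betw ((!) s) {..<?m} (set s)" by (rule bij_betw_nth[OF assms(1) refl refl])
  have "bij_betw (inv_into {..<?m} ((!) s) \<circ> f) {..<?m} {..<?m}"
    using f bij_betw_inv_into[OF nth] by (rule bij_betw_trans)
  then have "bij_betw p {..<?m} {..<?m}"
    by (rule bij_betw_cong[THEN iffD1, rotated]) (simp add: p_def)
  then show "p permutes {0..<?m}" unfolding atLeast0LessThan by (rule bij_imp_permutes) (simp add: p_def)
  show "s ! p i = f i" if "i < ?m" for i
    using that f_inv_into_f[of "f i" "(!) s" "{..<?m}"] bij_betw_apply[OF f] nth
    unfolding p_def bij_betw_def by auto
qed

lemma wedge_nonzero_obtains_transversal:
  assumes "wedge d vs S \<noteq> 0"
  shows "S \<subseteq> {..<d}" and "card S = length vs" and "\<exists>f. transversal vs S f"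
proof -
  show S: "S \<subseteq> {..<d}" and card: "card S = length vs"
    using assms unfolding wedge_def by (auto split: if_splits)
  let ?m = "length vs" and ?s = "sorted_list_of_set S"
  let ?A = "mat ?m ?m (\<lambda>(i, k). vs ! i $ (?s ! k))"
  have fin: "finite S" using S finite_subset by blast
  then have s: "distinct ?s" "length ?s = ?m" "set ?s = S" using card by auto
  have "det ?A \<noteq> 0" using assms S card unfolding wedge_def by simp
  then obtain p where p: "p permutes {0..<?m}" and nz: "\<And>i. i < ?m \<Longrightarrow> ?A $$ (i, p i) \<noteq> 0"
    using det_nonzero_obtains_permutation[OF mat_carrier] by blast
  have "bij_betw (\<lambda>i. ?s ! p i) {..<?m} S" using bij_betw_nth_permutes[of ?s p] s p by simp
  moreover have "p i < ?m" if "i < ?m" for i using p that by (simp add: permutes_in_image)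
  ultimately have "transversal vs S (\<lambda>i. ?s ! p i)" using nz unfolding transversal_def by simp
  then show "\<exists>f. transversal vs S f" by (rule exI[of _ "\<lambda>i. ?s ! p i"])
qed

lemma wedge_unit_if_unique_transversal:
  assumes S: "S \<subseteq> {..<d}" and card: "card S = length vs" and f: "transversal vs S f"
    and one: "\<And>i. i < length vs \<Longrightarrow> vs ! i $ f i = 1"
    and unique: "\<And>f'. transversal vs S f' \<Longrightarrow> \<forall>i<length vs. f' i = f i"
  shows "wedge d vs S \<in> {1, -1}"
proof -
  let ?m = "length vs" and ?s = "sorted_list_of_set S"
  let ?A = "mat ?m ?m (\<lambda>(i, k). vs ! i $ (?s ! k))"
  have fin: "finite S" using S finite_subset by blast
  then have s: "distinct ?s" "length ?s = ?m" "set ?s = S" using card by auto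
  obtain p where p: "p permutes {0..<?m}" and sp: "\<And>i. i < ?m \<Longrightarrow> ?s ! p i = f i"
    using bij_betw_nth_obtains_permutation[of ?s f] s f unfolding transversal_def by auto
  have p_less: "q i < ?m" if "q permutes {0..<?m}" "i < ?m" for q i
    using that by (simp add: permutes_in_image)
  have "det ?A = signof p"
  proof (rule det_eq_signof_unique_permutation[OF _ p])
    show "?A $$ (i, p i) = 1" if "i < ?m" for i using that one sp p_less[OF p] by simp
    fix q assume q: "q permutes {0..<?m}" and nz: "\<And>i. i < ?m \<Longrightarrow> ?A $$ (i, q i) \<noteq> 0"
    have "transversal vs S (\<lambda>i. ?s ! q i)"
      using bij_betw_nth_permutes[of ?s q] s q nz p_less[OF q] unfolding transversal_def by simp
    then have "?s ! q i = ?s ! p i" if "i < ?m" for i using unique that sp by auto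
    then have "q i = p i" if "i < ?m" for i
      using that p_less[OF p] p_less[OF q] s nth_eq_iff_index_eq by metis
    then show "q = p" using permutes_not_in[OF p] permutes_not_in[OF q] by (metis atLeastLessThan_iff ext zero_le)
  qed simp
  then show ?thesis using S card signof_pm_one[of p, where 'a = int] unfolding wedge_def by simp
qed

lemma strict_mono_on_eq_if_image_eq:
  fixes f g :: "'a::linorder \<Rightarrow> 'b::linorder"
  assumes A: "finite A" and f: "strict_mono_on A f" and g: "strict_mono_on A g"
    and im: "f ` A = g ` A" and x: "x \<in> A"
  shows "f x = g x"
proof -
  have sorted_image: "sorted_list_of_set (h ` A) = map h (sorted_list_of_set A)"
    if h: "strict_mono_on A h" for h :: "'a \<Rightarrow> 'b"
  proof -
    have "sorted_wrt (\<lambda>x y. h x < h y) (sorted_list_of_set A)"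
      by (rule sorted_wrt_mono_rel[of _ "(<)"]) (use h A in \<open>auto simp: strict_mono_on_def\<close>)
    then show ?thesis
      using A strict_mono_on_imp_inj_on[OF h]
      by (subst sorted_list_of_set_unique[symmetric]) (auto simp: sorted_wrt_map card_image)
  qed
  have "map f (sorted_list_of_set A) = map g (sorted_list_of_set A)"
    using sorted_image[OF f] sorted_image[OF g] im by simp
  then show ?thesis using x A by (simp add: map_eq_conv)
qed

lemma ex_strict_mono_on_onto:
  fixes A B :: "'a::wellorder set"
  assumes "finite A" and "finite B" and "card A = card B"
  obtains f where "strict_mono_on A f" and "f ` A = B"
proof -
  obtain hA where hA: "bij_betw hA {..<card A} A" "strict_mono_on {..<card A} hA"
    using ex_bij_betw_strict_mono_card[OF assms(1)] by blast
  obtain hB where hB: "bij_betw hB {..<card A} B" "strict_mono_on {..<card A} hB"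
    using ex_bij_betw_strict_mono_card[OF assms(2)] assms(3) by metis
  let ?iA = "the_inv_into {..<card A} hA"
  have iA: "bij_betw ?iA A {..<card A}" by (rule bij_betw_the_inv_into[OF hA(1)])
  have "strict_mono_on A (hB \<circ> ?iA)"
  proof (rule strict_mono_onI)
    fix x y assume "x \<in> A" "y \<in> A" "x < y"
    moreover have iAx: "?iA x \<in> {..<card A}" and iAy: "?iA y \<in> {..<card A}"
      using iA \<open>x \<in> A\<close> \<open>y \<in> A\<close> by (auto dest: bij_betw_apply)
    moreover have "hA (?iA x) = x" "hA (?iA y) = y"
      using hA(1) \<open>x \<in> A\<close> \<open>y \<in> A\<close> by (auto intro: f_the_inv_into_f_bij_betw)
    ultimately have "?iA x < ?iA y" using strict_mono_on_less[OF hA(2) iAx iAy] by simp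
    then show "(hB \<circ> ?iA) x < (hB \<circ> ?iA) y" using strict_mono_onD[OF hB(2) iAx iAy] by simp
  qed
  moreover have "(hB \<circ> ?iA) ` A = B" using iA hB(1) by (metis bij_betw_def image_comp)
  ultimately show thesis by (rule that)
qed

lemma Kset_memD:
  assumes "(K, \<kappa>) \<in> Kset n"
  shows "K \<subseteq> {1..n}" and "\<And>k. k \<in> K \<Longrightarrow> \<kappa> k \<in> {1..n}" and "\<And>k. k \<notin> K \<Longrightarrow> \<kappa> k = undefined"
    and "strict_mono_on K \<kappa>"
  using assms unfolding Kset_def by (auto simp: PiE_def extensional_def strict_mono_iff_mono)

text \<open>Row i < n of the matrix of v_wedge holds v_(i+1), whose e-part sits in column i and whose
x-part x_\<kappa>(i+1) in column n + \<kappa>(i+1) - 1. Taking the x-part exactly for the rows i with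
i + 1 \<in> J selects the columns col_set n \<kappa> J of e_({1..n} - J) \<and> x_\<kappa>(J).\<close>

definition col_map :: "nat \<Rightarrow> (nat \<Rightarrow> nat) \<Rightarrow> nat set \<Rightarrow> nat \<Rightarrow> nat" where
  "col_map n \<kappa> J i = (if Suc i \<in> J then n + \<kappa> (Suc i) - 1 else i)"

definition col_set :: "nat \<Rightarrow> (nat \<Rightarrow> nat) \<Rightarrow> nat set \<Rightarrow> nat set" where
  "col_set n \<kappa> J = col_map n \<kappa> J ` {..<n}"

definition x_count :: "nat \<Rightarrow> nat set \<Rightarrow> nat" where
  "x_count n S = card {j \<in> S. n \<le> j}"

context
  fixes n K \<kappa> J
  assumes Kk: "(K, \<kappa>) \<in> Kset n" and J: "J \<subseteq> K"
begin

lemma col_map_bounds: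
  assumes "i < n"
  shows "col_map n \<kappa> J i < 2 * n" and "Suc i \<in> J \<Longrightarrow> n \<le> col_map n \<kappa> J i"
    and "Suc i \<notin> J \<Longrightarrow> col_map n \<kappa> J i < n"
  using assms subsetD[OF J, of "Suc i"] Kset_memD(2)[OF Kk, of "Suc i"] unfolding col_map_def by auto

lemma strict_mono_on_x_col: "strict_mono_on J (\<lambda>k. n + \<kappa> k - 1)"
proof (rule strict_mono_onI)
  fix k l assume "k \<in> J" "l \<in> J" "k < l"
  moreover from this have "k \<in> K" "l \<in> K" using J by auto
  ultimately have "\<kappa> k < \<kappa> l" and "1 \<le> \<kappa> k"
    using strict_mono_onD[OF Kset_memD(4)[OF Kk]] Kset_memD(2)[OF Kk] by auto
  then show "n + \<kappa> k - 1 < n + \<kappa> l - 1" by simp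
qed

lemma col_set_low: "col_set n \<kappa> J \<inter> {..<n} = {i. i < n \<and> Suc i \<notin> J}"
  using col_map_bounds unfolding col_set_def by (fastforce simp: col_map_def)

lemma col_set_high: "{j \<in> col_set n \<kappa> J. n \<le> j} = (\<lambda>k. n + \<kappa> k - 1) ` J"
proof -
  have "J \<subseteq> Suc ` {..<n}" using J Kset_memD(1)[OF Kk] by (simp add: image_Suc_lessThan)
  then show ?thesis using col_map_bounds unfolding col_set_def by (force simp: col_map_def)
qed

lemma inj_on_col_map: "inj_on (col_map n \<kappa> J) {..<n}"
proof (rule inj_onI)
  fix i j assume ij: "i \<in> {..<n}" "j \<in> {..<n}" and eq: "col_map n \<kappa> J i = col_map n \<kappa> J j"
  have "\<kappa> (Suc i) = \<kappa> (Suc j) \<Longrightarrow> Suc i = Suc j" if "Suc i \<in> J" "Suc j \<in> J"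
    using that J strict_mono_on_imp_inj_on[OF Kset_memD(4)[OF Kk]] by (auto dest: inj_onD)
  then show "i = j"
    using ij eq col_map_bounds[of i] col_map_bounds[of j] Kset_memD(2)[OF Kk]
    unfolding col_map_def by (auto split: if_splits)
qed

lemma col_set_subset: "col_set n \<kappa> J \<subseteq> {..<2 * n}"
  using col_map_bounds(1) unfolding col_set_def by auto

lemma card_col_set: "card (col_set n \<kappa> J) = n"
  using card_image[OF inj_on_col_map] unfolding col_set_def by simp

lemma x_count_col_set: "x_count n (col_set n \<kappa> J) = card J"
  unfolding x_count_def col_set_high using strict_mono_on_imp_inj_on[OF strict_mono_on_x_col] by (rule card_image)

end

lemma col_set_inject:
  assumes Kk: "(K, \<kappa>) \<in> Kset n" and Kk': "(K', \<kappa>') \<in> Kset n" and "J \<subseteq> K" and "J' \<subseteq> K'"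
    and eq: "col_set n \<kappa> J = col_set n \<kappa>' J'"
  shows "J = J'"
proof -
  have "{i. i < n \<and> Suc i \<notin> J} = {i. i < n \<and> Suc i \<notin> J'}"
    using col_set_low[OF Kk assms(3)] col_set_low[OF Kk' assms(4)] eq by simp
  moreover have "J \<subseteq> Suc ` {..<n}" and "J' \<subseteq> Suc ` {..<n}"
    using assms(3,4) Kset_memD(1)[OF Kk] Kset_memD(1)[OF Kk'] by (auto simp: image_Suc_lessThan)
  ultimately show ?thesis by (auto simp: set_eq_iff)
qed

lemma v_vec_entry:
  assumes Kk: "(K, \<kappa>) \<in> Kset n" and "i < n" and "c < 2 * n"
  shows "v_vec n (K, \<kappa>) (Suc i) $ c = (if c = i \<or> (Suc i \<in> K \<and> c = n + \<kappa> (Suc i) - 1) then 1 else 0)"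
  using assms Kset_memD(2)[OF Kk, of "Suc i"] by (auto simp: v_vec_def e_vec_def x_vec_def)

lemma transversal_v_vecsE:
  assumes Kk: "(K, \<kappa>) \<in> Kset n" and S: "S \<subseteq> {..<2 * n}"
    and f: "transversal (map (v_vec n (K, \<kappa>)) [1..<n + 1]) S f"
  obtains J where "J \<subseteq> K" and "\<And>i. i < n \<Longrightarrow> f i = col_map n \<kappa> J i" and "S = col_set n \<kappa> J"
proof
  let ?J = "{k \<in> K. f (k - 1) \<noteq> k - 1}"
  show "?J \<subseteq> K" by auto
  have bij: "bij_betw f {..<n} S" and nz: "\<And>i. i < n \<Longrightarrow> v_vec n (K, \<kappa>) (Suc i) $ f i \<noteq> 0"
    using f unfolding transversal_def by (simp_all del: upt_Suc)
  show f_eq: "f i = col_map n \<kappa> ?J i" if "i < n" for i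
  proof -
    have "f i < 2 * n" using bij S that by (auto dest: bij_betw_apply)
    then have "f i = i \<or> (Suc i \<in> K \<and> f i = n + \<kappa> (Suc i) - 1)"
      using nz[OF that] v_vec_entry[OF Kk that] by (auto split: if_splits)
    then show ?thesis unfolding col_map_def by auto
  qed
  have "S = f ` {..<n}" using bij by (simp add: bij_betw_def)
  also have "\<dots> = col_set n \<kappa> ?J" unfolding col_set_def using f_eq by (intro image_cong) auto
  finally show "S = col_set n \<kappa> ?J" .
qed

lemma v_wedge_nonzero:
  assumes Kk: "(K, \<kappa>) \<in> Kset n" and nz: "v_wedge n (K, \<kappa>) S \<noteq> 0"
  shows "S \<subseteq> {..<2 * n}" and "card S = n" and "S = col_set n \<kappa> K \<or> x_count n S < card K"
proof -
  note transversal = wedge_nonzero_obtains_transversal[OF nz[unfolded v_wedge_def]]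
  show S: "S \<subseteq> {..<2 * n}" and "card S = n" using transversal(1,2) by simp_all
  obtain J where J: "J \<subseteq> K" and S_eq: "S = col_set n \<kappa> J"
    using transversal(3) transversal_v_vecsE[OF Kk S] by metis
  have "finite K" using Kset_memD(1)[OF Kk] finite_subset by blast
  then have "J = K \<or> card J < card K" using J psubset_card_mono by blast
  then show "S = col_set n \<kappa> K \<or> x_count n S < card K"
    using S_eq x_count_col_set[OF Kk J] by auto
qed

lemma v_wedge_col_set:
  assumes Kk: "(K, \<kappa>) \<in> Kset n"
  shows "v_wedge n (K, \<kappa>) (col_set n \<kappa> K) \<in> {1, -1}"
  unfolding v_wedge_def
proof (rule wedge_unit_if_unique_transversal)
  let ?vs = "map (v_vec n (K, \<kappa>)) [1..<n + 1]"
  show "col_set n \<kappa> K \<subseteq> {..<2 * n}" by (rule col_set_subset[OF Kk subset_refl])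
  show "card (col_set n \<kappa> K) = length ?vs" using card_col_set[OF Kk subset_refl] by (simp del: upt_Suc)
  have one: "v_vec n (K, \<kappa>) (Suc i) $ col_map n \<kappa> K i = 1" if "i < n" for i
    using v_vec_entry[OF Kk that col_map_bounds(1)[OF Kk subset_refl that]] by (simp add: col_map_def)
  then show "?vs ! i $ col_map n \<kappa> K i = 1" if "i < length ?vs" for i using that by (simp del: upt_Suc)
  show "transversal ?vs (col_set n \<kappa> K) (col_map n \<kappa> K)"
    using inj_on_col_map[OF Kk subset_refl] one unfolding transversal_def col_set_def bij_betw_def
    by (simp del: upt_Suc)
  fix f assume "transversal ?vs (col_set n \<kappa> K) f"
  then obtain J where "J \<subseteq> K" and f: "\<And>i. i < n \<Longrightarrow> f i = col_map n \<kappa> J i"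
    and "col_set n \<kappa> K = col_set n \<kappa> J"
    using transversal_v_vecsE[OF Kk col_set_subset[OF Kk subset_refl]] by blast
  then have "J = K" using col_set_inject[OF Kk Kk] by blast
  then show "\<forall>i<length ?vs. f i = col_map n \<kappa> K i" using f by (simp del: upt_Suc)
qed

lemma inj_on_col_set_Kset: "inj_on (\<lambda>(K, \<kappa>). col_set n \<kappa> K) (Kset n)"
proof (rule inj_onI, clarify)
  fix K \<kappa> K' \<kappa>'
  assume Kk: "(K, \<kappa>) \<in> Kset n" and Kk': "(K', \<kappa>') \<in> Kset n"
    and eq: "col_set n \<kappa> K = col_set n \<kappa>' K'"
  have "K = K'" using col_set_inject[OF Kk Kk' subset_refl subset_refl eq] .
  have "finite K" using Kset_memD(1)[OF Kk] finite_subset by blast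
  have image_eq: "(\<lambda>k. n + \<kappa> k - 1) ` K = (\<lambda>k. n + \<kappa>' k - 1) ` K"
    using col_set_high[OF Kk subset_refl] col_set_high[OF Kk' subset_refl] eq \<open>K = K'\<close> by simp
  have mono': "strict_mono_on K (\<lambda>k. n + \<kappa>' k - 1)"
    using strict_mono_on_x_col[OF Kk' subset_refl] \<open>K = K'\<close> by simp
  have x_eq: "n + \<kappa> k - 1 = n + \<kappa>' k - 1" if "k \<in> K" for k
    using strict_mono_on_eq_if_image_eq[OF \<open>finite K\<close> strict_mono_on_x_col[OF Kk subset_refl]
        mono' image_eq that] .
  have "\<kappa> k = \<kappa>' k" for k
  proof (cases "k \<in> K")
    case True
    then show ?thesis using x_eq Kset_memD(2)[OF Kk] Kset_memD(2)[OF Kk'] \<open>K = K'\<close> by force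
  next
    case False
    then show ?thesis using Kset_memD(3)[OF Kk] Kset_memD(3)[OF Kk'] \<open>K = K'\<close> by simp
  qed
  then have "\<kappa> = \<kappa>'" ..
  with \<open>K = K'\<close> show "K = K' \<and> \<kappa> = \<kappa>'" ..
qed

lemma col_set_surj:
  assumes S: "S \<subseteq> {..<2 * n}" and card: "card S = n"
  obtains K \<kappa> where "(K, \<kappa>) \<in> Kset n" and "S = col_set n \<kappa> K"
proof -
  define K where "K = Suc ` ({..<n} - S)"
  define H where "H = {j \<in> S. n \<le> j}"
  define B where "B = (\<lambda>j. j + 1 - n) ` H"
  have finS: "finite S" using S finite_subset by blast
  have "card S = card (S \<inter> {..<n}) + card H"
    using finS by (subst card_Un_disjoint[symmetric]) (auto simp: H_def intro: arg_cong[where f = card])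
  moreover have "card K = n - card (S \<inter> {..<n})"
    unfolding K_def by (simp add: card_image card_Diff_subset_Int Int_commute)
  moreover have "card B = card H"
    unfolding B_def by (rule card_image) (auto simp: H_def inj_on_def)
  ultimately have "card K = card B" using card by simp
  moreover have "finite K" and "finite B" using finS unfolding K_def B_def H_def by auto
  ultimately obtain f where f: "strict_mono_on K f" "f ` K = B"
    using ex_strict_mono_on_onto by metis
  define \<kappa> where "\<kappa> = restrict f K"
  have "K \<subseteq> {1..n}" unfolding K_def image_Suc_lessThan[symmetric] by blast
  moreover have "B \<subseteq> {1..n}" using S unfolding B_def H_def by (auto simp: subset_iff)
  then have "\<kappa> \<in> K \<rightarrow>\<^sub>E {1..n}" using f(2) unfolding \<kappa>_def by auto
  moreover have "strict_mono_on K \<kappa>" using f(1) unfolding \<kappa>_def strict_mono_on_def by simp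
  ultimately have Kk: "(K, \<kappa>) \<in> Kset n" unfolding Kset_def by (simp add: strict_mono_iff_mono)
  have low: "S \<inter> {..<n} = col_set n \<kappa> K \<inter> {..<n}"
    unfolding col_set_low[OF Kk subset_refl] by (auto simp: K_def)
  have "(\<lambda>k. n + \<kappa> k - 1) ` K = (\<lambda>b. n + b - 1) ` B"
    unfolding f(2)[symmetric] image_image by (simp add: \<kappa>_def)
  also have "\<dots> = H"
    unfolding B_def image_image by (rule trans[OF image_cong[OF refl] image_ident]) (simp add: H_def)
  finally have high: "{j \<in> S. n \<le> j} = {j \<in> col_set n \<kappa> K. n \<le> j}"
    unfolding col_set_high[OF Kk subset_refl] H_def ..
  have "S = (S \<inter> {..<n}) \<union> {j \<in> S. n \<le> j}" by auto
  also have "\<dots> = (col_set n \<kappa> K \<inter> {..<n}) \<union> {j \<in> col_set n \<kappa> K. n \<le> j}"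
    unfolding low high ..
  also have "\<dots> = col_set n \<kappa> K" by auto
  finally have "S = col_set n \<kappa> K" .
  with Kk show thesis by (rule that)
qed

lemma bij_betw_col_set_Kset:
  "bij_betw (\<lambda>(K, \<kappa>). col_set n \<kappa> K) (Kset n) {S. S \<subseteq> {..<2 * n} \<and> card S = n}"
  unfolding bij_betw_def
proof
  show "inj_on (\<lambda>(K, \<kappa>). col_set n \<kappa> K) (Kset n)" by (rule inj_on_col_set_Kset)
  show "(\<lambda>(K, \<kappa>). col_set n \<kappa> K) ` Kset n = {S. S \<subseteq> {..<2 * n} \<and> card S = n}"
  proof
    show "(\<lambda>(K, \<kappa>). col_set n \<kappa> K) ` Kset n \<subseteq> {S. S \<subseteq> {..<2 * n} \<and> card S = n}"
      using col_set_subset[OF _ subset_refl] card_col_set[OF _ subset_refl] by auto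
    show "{S. S \<subseteq> {..<2 * n} \<and> card S = n} \<subseteq> (\<lambda>(K, \<kappa>). col_set n \<kappa> K) ` Kset n"
    proof
      fix S assume "S \<in> {S. S \<subseteq> {..<2 * n} \<and> card S = n}"
      then obtain K \<kappa> where "(K, \<kappa>) \<in> Kset n" and "S = col_set n \<kappa> K"
        using col_set_surj by blast
      then show "S \<in> (\<lambda>(K, \<kappa>). col_set n \<kappa> K) ` Kset n" by force
    qed
  qed
qed

theorem lemma1:
  fixes n :: nat
  shows "is_Z_basis (Kset n) (v_wedge n) (ext_power (2 * n) n)"
proof -
  let ?T = "{S. S \<subseteq> {..<2 * n} \<and> card S = n}"
  have "is_Z_basis (Kset n) (v_wedge n) {y. \<forall>S. y S \<noteq> 0 \<longrightarrow> S \<in> ?T}"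
  proof (rule is_Z_basis_unitriangular[where phi = "\<lambda>(K, \<kappa>). col_set n \<kappa> K" and g = "x_count n"])
    show "bij_betw (\<lambda>(K, \<kappa>). col_set n \<kappa> K) (Kset n) ?T" by (rule bij_betw_col_set_Kset)
    show "finite ?T" by (rule finite_subset[of _ "Pow {..<2 * n}"]) auto
    fix Kk S assume "Kk \<in> Kset n"
    moreover obtain K \<kappa> where Kk: "Kk = (K, \<kappa>)" by fastforce
    ultimately have K\<kappa>: "(K, \<kappa>) \<in> Kset n" by simp
    show "v_wedge n Kk ((\<lambda>(K, \<kappa>). col_set n \<kappa> K) Kk) \<in> {1, -1}"
      using v_wedge_col_set[OF K\<kappa>] Kk by simp
    assume nz: "v_wedge n Kk S \<noteq> 0"
    show "S = (\<lambda>(K, \<kappa>). col_set n \<kappa> K) Kk \<or> x_count n S < x_count n ((\<lambda>(K, \<kappa>). col_set n \<kappa> K) Kk)"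
      using v_wedge_nonzero(3)[OF K\<kappa>] nz x_count_col_set[OF K\<kappa> subset_refl] Kk by simp
    show "S \<in> ?T" using v_wedge_nonzero(1,2)[OF K\<kappa>] nz Kk by simp
  qed
  moreover have "ext_power (2 * n) n = {y. \<forall>S. y S \<noteq> 0 \<longrightarrow> S \<in> ?T}"
    unfolding ext_power_def by auto
  ultimately show ?thesis by simp
qed

end
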